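(* Consider the nonlinear kinetic equation with transverse scattering described in the context, and a maximally extended local solution on $[0,z_* )$ satisfying the standing assumptions. Assume $g<0$ (hence $H\ge0$). Then for all $z\in[0,z_* )$, $$V_x(0)+2V_{xp}(0)z+(d\sigma\wedge2)[H-\bar H]z^2\le V_x(z)\le V_x(0)+2V_{xp}(0)z+(d\sigma\vee2)[H-\bar H]z^2,$$ where $a\vee b=\max(a,b)$ and $a\wedge b=\min(a,b)$.
   Context: Setting. Let $d\ge1$, $\sigma>0$, $g\in\mathbb R$. Let $\Phi(w,\mathbf p)\ge0$, $(w,\mathbf p)\in\mathbb R\times\mathbb R^d$, be a power spectrum density, rapidly decaying, with $\Phi(w,\mathbf p)=\Phi(-w,\mathbf p)=\Phi(w,-\mathbf p)=\Phi(-w,-\mathbf p)$. The transverse scattering operator $\mathcal L$ is either the linear Boltzmann operator $\mathcal L W(\mathbf p)=2\pi\int\delta\big(\tfrac{|\mathbf q|^2-|\mathbf p|^2}{2}\big)\big[\int\Phi(w,\mathbf q-\mathbf p)dw\big][W(\mathbf q)-W(\mathbf p)]d\mathbf q$, or the Fokker–Planck operator $\mathcal LW=\nabla_{\mathbf p}\cdot(\mathbf D(\mathbf p)\nabla_{\mathbf p}W)$ with $\mathbf D(\mathbf p)=\pi|\mathbf p|^{-1}\int_{\mathbf p\cdot\mathbf p_\perp=0}\int\Phi(w,\mathbf p_\perp)dw\,\mathbf p_\perp\otimes\mathbf p_\perp\,d\mathbf p_\perp$. The kinetic equation is $\partial_zW+\mathbf p\cdot\nabla_{\mathbf x}W+\nabla_{\mathbf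 x}U\cdot\nabla_{\mathbf p}W=\mathcal LW$ for $W(z,\mathbf x,\mathbf p)\ge0$, $\mathbf x,\mathbf p\in\mathbb R^d$, with $\rho(z,\mathbf x)=\int W\,d\mathbf p$ and $U=g\rho^{\sigma}$, understood weakly: $\partial_z\int\Theta W-\int\mathbf p\cdot\nabla_{\mathbf x}\Theta\,W-\int\nabla_{\mathbf x}U\cdot\nabla_{\mathbf p}\Theta\,W-\int(\mathcal L^*\Theta)W=0$ for smooth rapidly decaying $\Theta$. Normalization $\int W\,d\mathbf x\,d\mathbf p=1$. Notation (all integrals over $\mathbb R^{2d}$ against $W(z,\cdot)$): $\bar{\mathbf x}=\int\mathbf xW$, $\bar{\mathbf p}=\int\mathbf pW$, $V_x=\int|\mathbf x-\bar{\mathbf x}|^2W$, $V_p=\int|\mathbf p-\bar{\mathbf p}|^2W$, $V_{xp}=\int(\mathbf x-\bar{\mathbf x})\cdot(\mathbf p-\bar{\mathbf p})W$, Hamiltonian $H=\frac12\int|\mathbf p|^2W-\frac{g}{\sigma+1}\int\rho^{\sigma+1}d\mathbf x$, mean Hamiltonian $\bar H=\frac12|\bar{\mathbf p}|^2$ (both constant in $z$ in this setting). Standing assumptions: a local solution exists in the space of nonnegative measures with square-integrable density, finite Dirichlet form $-\int W\mathcal LW$, finite positive variances $V_x,V_p$ and finite Hamiltonian; $[0,z_* )$ is the maximal interval of existence of this solution; on $[0,z_* )$ the weak formulation may be applied with the test functions $x_i,p_i,|\mathbf x|^2,\mathbf x\cdot\mathbf p,|\mathbf p|^2$ (so the energy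 law and variance identity hold); and $W$ has mixed-state (Wigner measure) structure, so $V_{xp}^2\le V_xV_p$. *)

theory Defs
  imports "HOL-Analysis.Analysis"
begin

text \<open>Phase-space densities: a phase point is a pair (x, p) with x, p in R^d,
  R^d rendered as real^'d (d = CARD('d)).\<close>

type_synonym 'd phase = "(real^'d) \<times> (real^'d)"

definition rho :: "('d::finite phase \<Rightarrow> real) \<Rightarrow> real^'d \<Rightarrow> real" where
  "rho w x = (LINT p|lborel. w (x, p))"

definition xbar :: "('d::finite phase \<Rightarrow> real) \<Rightarrow> real^'d" where
  "xbar w = (LINT v|lborel. w v *\<^sub>R fst v)"

definition pbar :: "('d::finite phase \<Rightarrow> real) \<Rightarrow> real^'d" where
  "pbar w = (LINT v|lborel. w v *\<^sub>R snd v)"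

definition Vx :: "('d::finite phase \<Rightarrow> real) \<Rightarrow> real" where
  "Vx w = (LINT v|lborel. (norm (fst v - xbar w))\<^sup>2 * w v)"

definition Vp :: "('d::finite phase \<Rightarrow> real) \<Rightarrow> real" where
  "Vp w = (LINT v|lborel. (norm (snd v - pbar w))\<^sup>2 * w v)"

definition Vxp :: "('d::finite phase \<Rightarrow> real) \<Rightarrow> real" where
  "Vxp w = (LINT v|lborel. ((fst v - xbar w) \<bullet> (snd v - pbar w)) * w v)"

definition Pot :: "real \<Rightarrow> real \<Rightarrow> ('d::finite phase \<Rightarrow> real) \<Rightarrow> real" where
  "Pot g \<sigma> w = - g / (\<sigma> + 1) * (LINT x|lborel. (rho w x) powr (\<sigma> + 1))"

definition Ham :: "real \<Rightarrow> real \<Rightarrow> ('d::finite phase \<Rightarrow> real) \<Rightarrow> real" where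
  "Ham g \<sigma> w = (LINT v|lborel. (norm (snd v))\<^sup>2 * w v) / 2 + Pot g \<sigma> w"

definition Hbar :: "('d::finite phase \<Rightarrow> real) \<Rightarrow> real" where
  "Hbar w = (norm (pbar w))\<^sup>2 / 2"

end

theory Submission
  imports Defs
begin

text \<open>By the virial law \<open>Vx' = 2 Vxp\<close>, and by the variance identity
  \<open>Vxp' = Vp + d \<sigma> Pot\<close>. Conservation of \<open>Ham\<close> and \<open>Hbar\<close> turns
  \<open>Vp = 2 (Ham - Hbar - Pot)\<close> into \<open>Vxp' = d \<sigma> Pot + 2 (E - Pot)\<close> with the constant
  \<open>E = Ham - Hbar\<close>. For \<open>g < 0\<close> we have \<open>0 \<le> Pot \<le> E\<close>, the upper bound because
  \<open>Vp > 0\<close>; so \<open>Vxp'\<close> is a weighted sum of \<open>d \<sigma>\<close> and \<open>2\<close> with weights \<open>Pot\<close> and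
  \<open>E - Pot\<close>, and lies between \<open>min (d \<sigma>) 2 * E\<close> and \<open>max (d \<sigma>) 2 * E\<close>.
  Integrating twice gives the two quadratic bounds on \<open>Vx\<close>.\<close>

lemma DERIV_nonneg_imp_increasing_on_interval:
  fixes h h' :: "real \<Rightarrow> real"
  assumes S: "is_interval S"
    and h: "\<And>x. x \<in> S \<Longrightarrow> (h has_real_derivative h' x) (at x within S)"
    and nonneg: "\<And>x. x \<in> S \<Longrightarrow> 0 \<le> h' x"
    and "a \<in> S" "b \<in> S" "a \<le> b"
  shows "h a \<le> h b"
proof -
  have sub: "{a..b} \<subseteq> S"
    using S \<open>a \<in> S\<close> \<open>b \<in> S\<close> unfolding is_interval_1 by (meson atLeastAtMost_iff subsetI)
  have "(h has_derivative (*) (h' x)) (at x within {a..b})" if "a \<le> x" "x \<le> b" for x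
  proof -
    have "x \<in> S" using sub that by auto
    then have "(h has_real_derivative h' x) (at x within {a..b})"
      using h has_field_derivative_subset[OF _ sub] by blast
    then show ?thesis unfolding has_field_derivative_def .
  qed
  from mvt_very_simple[OF \<open>a \<le> b\<close> this]
  obtain \<xi> where \<xi>: "\<xi> \<in> {a..b}" "h b - h a = h' \<xi> * (b - a)"
    by auto
  have "0 \<le> h' \<xi> * (b - a)"
    using nonneg[of \<xi>] \<xi>(1) sub \<open>a \<le> b\<close> by auto
  then show ?thesis using \<xi>(2) by simp
qed

lemma second_order_lower_bound:
  fixes F G G' :: "real \<Rightarrow> real"
  assumes S: "is_interval S"
    and F: "\<And>x. x \<in> S \<Longrightarrow> (F has_real_derivative 2 * G x) (at x within S)"
    and G: "\<And>x. x \<in> S \<Longrightarrow> (G has_real_derivative G' x) (at x within S)"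
    and lower: "\<And>x. x \<in> S \<Longrightarrow> c \<le> G' x"
    and "a \<in> S" "z \<in> S" "a \<le> z"
  shows "F a + 2 * G a * (z - a) + c * (z - a)\<^sup>2 \<le> F z"
proof -
  define S' where "S' = S \<inter> {a..}"
  have S': "is_interval S'"
    unfolding S'_def by (intro is_interval_Int S) (simp add: is_interval_ci)
  have G_lower: "G a + c * (x - a) \<le> G x" if "x \<in> S'" for x
  proof -
    have "G a - c * a \<le> G x - c * x"
    proof (rule DERIV_nonneg_imp_increasing_on_interval[OF S',
          where h="\<lambda>t. G t - c * t" and h'="\<lambda>y. G' y - c"])
      show "((\<lambda>t. G t - c * t) has_real_derivative G' y - c) (at y within S')" if "y \<in> S'" for y
      proof -
        have "(G has_real_derivative G' y) (at y within S')"
          using G that has_field_derivative_subset unfolding S'_def by blast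
        then show ?thesis by (auto intro!: derivative_eq_intros)
      qed
      show "0 \<le> G' y - c" if "y \<in> S'" for y
        using lower that unfolding S'_def by auto
    qed (use that \<open>a \<in> S\<close> in \<open>auto simp: S'_def\<close>)
    then show ?thesis by (simp add: algebra_simps)
  qed
  have "F a - 2 * G a * a - c * (a - a)\<^sup>2 \<le> F z - 2 * G a * z - c * (z - a)\<^sup>2"
  proof (rule DERIV_nonneg_imp_increasing_on_interval[OF S',
        where h="\<lambda>t. F t - 2 * G a * t - c * (t - a)\<^sup>2"
          and h'="\<lambda>y. 2 * G y - 2 * G a - 2 * c * (y - a)"])
    show "((\<lambda>t. F t - 2 * G a * t - c * (t - a)\<^sup>2) has_real_derivative
        2 * G y - 2 * G a - 2 * c * (y - a)) (at y within S')" if "y \<in> S'" for y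
    proof -
      have "(F has_real_derivative 2 * G y) (at y within S')"
        using F that has_field_derivative_subset unfolding S'_def by blast
      then show ?thesis by (auto intro!: derivative_eq_intros simp: algebra_simps)
    qed
    show "0 \<le> 2 * G y - 2 * G a - 2 * c * (y - a)" if "y \<in> S'" for y
      using G_lower[OF that] by simp
  qed (use assms in \<open>auto simp: S'_def\<close>)
  then show ?thesis by (simp add: algebra_simps)
qed

lemma second_order_bounds:
  fixes F G G' :: "real \<Rightarrow> real"
  assumes S: "is_interval S"
    and F: "\<And>x. x \<in> S \<Longrightarrow> (F has_real_derivative 2 * G x) (at x within S)"
    and G: "\<And>x. x \<in> S \<Longrightarrow> (G has_real_derivative G' x) (at x within S)"
    and bounds: "\<And>x. x \<in> S \<Longrightarrow> c \<le> G' x \<and> G' x \<le> C"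
    and "a \<in> S" "z \<in> S" "a \<le> z"
  shows "F a + 2 * G a * (z - a) + c * (z - a)\<^sup>2 \<le> F z
    \<and> F z \<le> F a + 2 * G a * (z - a) + C * (z - a)\<^sup>2"
proof
  show "F a + 2 * G a * (z - a) + c * (z - a)\<^sup>2 \<le> F z"
    using second_order_lower_bound[OF S F G _ assms(5-7)] bounds by blast
  have "- F a + 2 * - G a * (z - a) + - C * (z - a)\<^sup>2 \<le> - F z"
  proof (rule second_order_lower_bound[OF S _ _ _ assms(5-7)])
    fix x assume "x \<in> S"
    show "((\<lambda>t. - F t) has_real_derivative 2 * - G x) (at x within S)"
      using F[OF \<open>x \<in> S\<close>] by (auto intro!: derivative_eq_intros)
    show "((\<lambda>t. - G t) has_real_derivative - G' x) (at x within S)"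
      using G[OF \<open>x \<in> S\<close>] by (auto intro!: derivative_eq_intros)
    show "- C \<le> - G' x" using bounds[OF \<open>x \<in> S\<close>] by simp
  qed
  then show "F z \<le> F a + 2 * G a * (z - a) + C * (z - a)\<^sup>2" by simp
qed

lemma integral_vec_nth:
  fixes f :: "'a \<Rightarrow> real^'n"
  assumes "integrable M f"
  shows "(LINT u|M. f u) $ i = (LINT u|M. f u $ i)"
  using integral_inner_left[of "axis i 1" M f] assms by (simp add: cart_eq_inner_axis)

lemma integrable_scaleR_of_second_moment:
  fixes f :: "'a \<Rightarrow> 'b::euclidean_space"
  assumes w: "integrable M w" and nonneg: "\<And>v. 0 \<le> w v"
    and f: "f \<in> borel_measurable M"
    and f2: "integrable M (\<lambda>v. (norm (f v))\<^sup>2 * w v)"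
  shows "integrable M (\<lambda>v. w v *\<^sub>R f v)"
proof (rule Bochner_Integration.integrable_bound[where f="\<lambda>v. w v + (norm (f v))\<^sup>2 * w v"])
  show "integrable M (\<lambda>v. w v + (norm (f v))\<^sup>2 * w v)" using w f2 by auto
  show "(\<lambda>v. w v *\<^sub>R f v) \<in> borel_measurable M" using w f by measurable
  have "norm (w v *\<^sub>R f v) \<le> norm (w v + (norm (f v))\<^sup>2 * w v)" for v
  proof -
    have "2 * norm (f v) \<le> 1 + (norm (f v))\<^sup>2"
      using zero_le_power2[of "norm (f v) - 1"] by (simp add: power2_diff)
    then have "norm (f v) * w v \<le> (1 + (norm (f v))\<^sup>2) * w v"
      using nonneg[of v] norm_ge_zero[of "f v"] by (intro mult_right_mono) linarith+
    then show ?thesis using nonneg[of v] by (simp add: algebra_simps)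
  qed
  then show "AE v in M. norm (w v *\<^sub>R f v) \<le> norm (w v + (norm (f v))\<^sup>2 * w v)"
    by simp
qed

lemma integrable_inner_of_second_moments:
  fixes f g :: "'a \<Rightarrow> 'b::euclidean_space"
  assumes nonneg: "\<And>v. 0 \<le> w v" and w: "w \<in> borel_measurable M"
    and f: "f \<in> borel_measurable M" and g: "g \<in> borel_measurable M"
    and f2: "integrable M (\<lambda>v. (norm (f v))\<^sup>2 * w v)"
    and g2: "integrable M (\<lambda>v. (norm (g v))\<^sup>2 * w v)"
  shows "integrable M (\<lambda>v. (f v \<bullet> g v) * w v)"
proof (rule Bochner_Integration.integrable_bound
    [where f="\<lambda>v. (norm (f v))\<^sup>2 * w v + (norm (g v))\<^sup>2 * w v"])
  show "integrable M (\<lambda>v. (norm (f v))\<^sup>2 * w v + (norm (g v))\<^sup>2 * w v)" using f2 g2 by auto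
  show "(\<lambda>v. (f v \<bullet> g v) * w v) \<in> borel_measurable M" using w f g by measurable
  have "norm ((f v \<bullet> g v) * w v)
      \<le> norm ((norm (f v))\<^sup>2 * w v + (norm (g v))\<^sup>2 * w v)" for v
  proof -
    have "2 * (norm (f v) * norm (g v)) \<le> (norm (f v))\<^sup>2 + (norm (g v))\<^sup>2"
      using zero_le_power2[of "norm (f v) - norm (g v)"] by (simp add: power2_diff)
    then have "\<bar>f v \<bullet> g v\<bar> * w v \<le> ((norm (f v))\<^sup>2 + (norm (g v))\<^sup>2) * w v"
      using nonneg[of v] Cauchy_Schwarz_ineq2[of "f v" "g v"]
        mult_nonneg_nonneg[OF norm_ge_zero[of "f v"] norm_ge_zero[of "g v"]]
      by (intro mult_right_mono) linarith+
    then show ?thesis using nonneg[of v] by (simp add: abs_mult algebra_simps)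
  qed
  then show "AE v in M. norm ((f v \<bullet> g v) * w v)
      \<le> norm ((norm (f v))\<^sup>2 * w v + (norm (g v))\<^sup>2 * w v)"
    by simp
qed

lemma integral_centered_inner:
  fixes f g :: "'a \<Rightarrow> 'b::euclidean_space" and w :: "'a \<Rightarrow> real" and M :: "'a measure"
  defines "fbar \<equiv> LINT u|M. w u *\<^sub>R f u" and "gbar \<equiv> LINT u|M. w u *\<^sub>R g u"
  assumes w: "integrable M w" and nonneg: "\<And>v. 0 \<le> w v" and normalized: "(LINT v|M. w v) = 1"
    and f: "f \<in> borel_measurable M" and g: "g \<in> borel_measurable M"
    and f2: "integrable M (\<lambda>v. (norm (f v))\<^sup>2 * w v)"
    and g2: "integrable M (\<lambda>v. (norm (g v))\<^sup>2 * w v)"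
  shows "(LINT v|M. ((f v - fbar) \<bullet> (g v - gbar)) * w v)
    = (LINT v|M. (f v \<bullet> g v) * w v) - fbar \<bullet> gbar"
proof -
  have wf: "integrable M (\<lambda>v. w v *\<^sub>R f v)"
    using integrable_scaleR_of_second_moment[OF w nonneg f f2] .
  have wg: "integrable M (\<lambda>v. w v *\<^sub>R g v)"
    using integrable_scaleR_of_second_moment[OF w nonneg g g2] .
  have fg: "integrable M (\<lambda>v. (f v \<bullet> g v) * w v)"
    using integrable_inner_of_second_moments[OF nonneg _ f g f2 g2] w by auto
  have "(LINT v|M. ((f v - fbar) \<bullet> (g v - gbar)) * w v)
      = (LINT v|M. (f v \<bullet> g v) * w v - fbar \<bullet> (w v *\<^sub>R g v) - (w v *\<^sub>R f v) \<bullet> gbar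
          + (fbar \<bullet> gbar) * w v)"
    by (rule arg_cong[where f="integral\<^sup>L M"])
      (auto simp: algebra_simps inner_diff_left inner_diff_right)
  also have "\<dots> = (LINT v|M. (f v \<bullet> g v) * w v) - (LINT v|M. fbar \<bullet> (w v *\<^sub>R g v))
      - (LINT v|M. (w v *\<^sub>R f v) \<bullet> gbar) + (LINT v|M. (fbar \<bullet> gbar) * w v)"
  proof -
    have "integrable M (\<lambda>v. fbar \<bullet> (w v *\<^sub>R g v))"
      by (rule Bochner_Integration.integrable_inner_right) (rule wg)
    moreover have "integrable M (\<lambda>v. (w v *\<^sub>R f v) \<bullet> gbar)"
      by (rule Bochner_Integration.integrable_inner_left) (rule wf)
    moreover have "integrable M (\<lambda>v. (fbar \<bullet> gbar) * w v)"
      using w by simp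
    ultimately show ?thesis
      using fg by (simp only: Bochner_Integration.integral_add Bochner_Integration.integral_diff
          Bochner_Integration.integrable_diff)
  qed
  also have "\<dots> = (LINT v|M. (f v \<bullet> g v) * w v) - fbar \<bullet> gbar - fbar \<bullet> gbar + fbar \<bullet> gbar"
  proof -
    have "(LINT v|M. fbar \<bullet> (w v *\<^sub>R g v)) = fbar \<bullet> gbar"
      unfolding gbar_def by (rule integral_inner_right) (rule wg)
    moreover have "(LINT v|M. (w v *\<^sub>R f v) \<bullet> gbar) = fbar \<bullet> gbar"
      unfolding fbar_def by (rule integral_inner_left) (rule wf)
    ultimately show ?thesis using normalized by simp
  qed
  finally show ?thesis by simp
qed

definition phase_density :: "('d::finite phase \<Rightarrow> real) \<Rightarrow> bool" where
  "phase_density w \<longleftrightarrow> (\<forall>v. 0 \<le> w v) \<and> integrable lborel w \<and> (LINT v|lborel. w v) = 1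
    \<and> integrable lborel (\<lambda>v. (norm (fst v))\<^sup>2 * w v)
    \<and> integrable lborel (\<lambda>v. (norm (snd v))\<^sup>2 * w v)"

lemma borel_measurable_fst_phase: "(fst :: 'd::finite phase \<Rightarrow> real^'d) \<in> borel_measurable lborel"
  by (simp add: borel_measurable_continuous_onI continuous_on_fst)

lemma borel_measurable_snd_phase: "(snd :: 'd::finite phase \<Rightarrow> real^'d) \<in> borel_measurable lborel"
  by (simp add: borel_measurable_continuous_onI continuous_on_snd)

lemma xbar_nth:
  assumes "phase_density w"
  shows "xbar w $ i = (LINT v|lborel. fst v $ i * w v)"
proof -
  have "integrable lborel (\<lambda>v. w v *\<^sub>R fst v)"
    using assms borel_measurable_fst_phase
    by (intro integrable_scaleR_of_second_moment) (auto simp: phase_density_def)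
  then show ?thesis
    unfolding xbar_def by (simp add: integral_vec_nth mult.commute)
qed

lemma pbar_nth:
  assumes "phase_density w"
  shows "pbar w $ i = (LINT v|lborel. snd v $ i * w v)"
proof -
  have "integrable lborel (\<lambda>v. w v *\<^sub>R snd v)"
    using assms borel_measurable_snd_phase
    by (intro integrable_scaleR_of_second_moment) (auto simp: phase_density_def)
  then show ?thesis
    unfolding pbar_def by (simp add: integral_vec_nth mult.commute)
qed

lemma Vx_eq_second_moment:
  assumes "phase_density w"
  shows "Vx w = (LINT v|lborel. (norm (fst v))\<^sup>2 * w v) - (norm (xbar w))\<^sup>2"
proof -
  have "Vx w = (LINT v|lborel. (fst v \<bullet> fst v) * w v) - xbar w \<bullet> xbar w"
    unfolding Vx_def xbar_def power2_norm_eq_inner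
    using assms unfolding phase_density_def
    by (intro integral_centered_inner borel_measurable_fst_phase) auto
  then show ?thesis by (simp add: power2_norm_eq_inner)
qed

lemma Vxp_eq_second_moment:
  assumes "phase_density w"
  shows "Vxp w = (LINT v|lborel. (fst v \<bullet> snd v) * w v) - xbar w \<bullet> pbar w"
  unfolding Vxp_def xbar_def pbar_def
  using assms unfolding phase_density_def
  by (intro integral_centered_inner borel_measurable_fst_phase borel_measurable_snd_phase) auto

lemma Vp_eq_second_moment:
  assumes "phase_density w"
  shows "Vp w = (LINT v|lborel. (norm (snd v))\<^sup>2 * w v) - (norm (pbar w))\<^sup>2"
proof -
  have "Vp w = (LINT v|lborel. (snd v \<bullet> snd v) * w v) - pbar w \<bullet> pbar w"
    unfolding Vp_def pbar_def power2_norm_eq_inner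
    using assms unfolding phase_density_def
    by (intro integral_centered_inner borel_measurable_snd_phase) auto
  then show ?thesis by (simp add: power2_norm_eq_inner)
qed

lemma Vp_eq_Ham:
  assumes "phase_density w"
  shows "Vp w = 2 * (Ham g \<sigma> w - Hbar w - Pot g \<sigma> w)"
  using Vp_eq_second_moment[OF assms] unfolding Ham_def Hbar_def by simp

lemma Pot_nonneg:
  assumes "g \<le> 0" "-1 \<le> \<sigma>"
  shows "0 \<le> Pot g \<sigma> w"
proof -
  have "0 \<le> - g / (\<sigma> + 1)"
    using assms by (intro divide_nonneg_nonneg) auto
  moreover have "0 \<le> (LINT x|lborel. (rho w x) powr (\<sigma> + 1))"
    by (rule Bochner_Integration.integral_nonneg) simp
  ultimately show ?thesis
    unfolding Pot_def by (rule mult_nonneg_nonneg)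
qed

lemma weighted_sum_between_min_max:
  fixes a b E P :: real
  assumes "0 \<le> P" "P \<le> E"
  shows "min a b * E \<le> a * P + b * (E - P) \<and> a * P + b * (E - P) \<le> max a b * E"
proof -
  have split: "c * E = c * (E - P) + c * P" for c
    by (simp add: algebra_simps)
  have "min a b * P \<le> a * P" "min a b * (E - P) \<le> b * (E - P)"
    "a * P \<le> max a b * P" "b * (E - P) \<le> max a b * (E - P)"
    using assms by (simp_all add: mult_right_mono)
  then show ?thesis
    using split[of "min a b"] split[of "max a b"] by linarith
qed

lemma has_real_derivative_Vx:
  fixes W :: "real \<Rightarrow> 'd::finite phase \<Rightarrow> real"
  assumes density: "\<And>t. t \<in> S \<Longrightarrow> phase_density (W t)" and "z \<in> S"
    and first_moments: "\<And>i. ((\<lambda>t. LINT v|lborel. fst v $ i * W t v)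
      has_real_derivative (LINT v|lborel. snd v $ i * W z v)) (at z within S)"
    and second_moment: "((\<lambda>t. LINT v|lborel. (norm (fst v))\<^sup>2 * W t v)
      has_real_derivative 2 * (LINT v|lborel. (fst v \<bullet> snd v) * W z v)) (at z within S)"
  shows "((\<lambda>t. Vx (W t)) has_real_derivative 2 * Vxp (W z)) (at z within S)"
proof -
  define A where "A t = (LINT v|lborel. (norm (fst v))\<^sup>2 * W t v)" for t
  define X where "X i t = (LINT v|lborel. fst v $ i * W t v)" for i t
  define P where "P i t = (LINT v|lborel. snd v $ i * W t v)" for i t
  have Vx_eq: "Vx (W t) = A t - (\<Sum>i\<in>UNIV. (X i t)\<^sup>2)" if "t \<in> S" for t
    using Vx_eq_second_moment[OF density[OF that]] xbar_nth[OF density[OF that]]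
    unfolding A_def X_def power2_norm_eq_inner inner_vec_def by (simp add: power2_eq_square)
  have Vxp_eq: "Vxp (W z) = (LINT v|lborel. (fst v \<bullet> snd v) * W z v) - (\<Sum>i\<in>UNIV. X i z * P i z)"
    using Vxp_eq_second_moment[OF density[OF \<open>z \<in> S\<close>]]
      xbar_nth[OF density[OF \<open>z \<in> S\<close>]] pbar_nth[OF density[OF \<open>z \<in> S\<close>]]
    unfolding X_def P_def inner_vec_def[of "xbar _"] by simp
  have "((\<lambda>t. A t - (\<Sum>i\<in>UNIV. (X i t)\<^sup>2)) has_real_derivative
      2 * (LINT v|lborel. (fst v \<bullet> snd v) * W z v) - (\<Sum>i\<in>UNIV. 2 * X i z * P i z)) (at z within S)"
    using second_moment first_moments unfolding A_def X_def P_def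
    by (intro DERIV_diff DERIV_sum) (auto intro!: derivative_eq_intros)
  then have "((\<lambda>t. A t - (\<Sum>i\<in>UNIV. (X i t)\<^sup>2)) has_real_derivative 2 * Vxp (W z)) (at z within S)"
    unfolding Vxp_eq by (simp add: sum_distrib_left mult.assoc right_diff_distrib)
  then show ?thesis
    by (rule has_field_derivative_transform_within[OF _ zero_less_one \<open>z \<in> S\<close>]) (simp add: Vx_eq)
qed

theorem corollary2:
  fixes W :: "real \<Rightarrow> 'd::finite phase \<Rightarrow> real"
    and g \<sigma> :: real and zs :: ereal
  defines "I \<equiv> {z::real. 0 \<le> z \<and> ereal z < zs}"
  assumes sigma_pos: "\<sigma> > 0"
    and g_neg: "g < 0"
    and zs_pos: "zs > 0"
    and nonneg: "\<forall>z\<in>I. \<forall>v. W z v \<ge> 0"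
    and int_W: "\<forall>z\<in>I. integrable lborel (W z)"
    and int_W2: "\<forall>z\<in>I. integrable lborel (\<lambda>v. (W z v)\<^sup>2)"
    and int_xx: "\<forall>z\<in>I. integrable lborel (\<lambda>v. (norm (fst v))\<^sup>2 * W z v)"
    and int_pp: "\<forall>z\<in>I. integrable lborel (\<lambda>v. (norm (snd v))\<^sup>2 * W z v)"
    and int_rho: "\<forall>z\<in>I. integrable lborel (\<lambda>x. (rho (W z) x) powr (\<sigma> + 1))"
    and normalized: "\<forall>z\<in>I. (LINT v|lborel. W z v) = 1"
    and Vx_pos: "\<forall>z\<in>I. Vx (W z) > 0"
    and Vp_pos: "\<forall>z\<in>I. Vp (W z) > 0"
    and mixed_state: "\<forall>z\<in>I. (Vxp (W z))\<^sup>2 \<le> Vx (W z) * Vp (W z)"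
    and weak_x: "\<forall>z\<in>I. \<forall>i. ((\<lambda>t. LINT v|lborel. fst v $ i * W t v)
                  has_real_derivative (LINT v|lborel. snd v $ i * W z v)) (at z within I)"
    and weak_xx: "\<forall>z\<in>I. ((\<lambda>t. LINT v|lborel. (norm (fst v))\<^sup>2 * W t v)
                  has_real_derivative 2 * (LINT v|lborel. (fst v \<bullet> snd v) * W z v)) (at z within I)"
    and variance_identity: "\<forall>z\<in>I. ((\<lambda>t. Vxp (W t))
                  has_real_derivative Vp (W z) + real CARD('d) * \<sigma> * Pot g \<sigma> (W z)) (at z within I)"
    and energy_law: "\<forall>z\<in>I. Ham g \<sigma> (W z) = Ham g \<sigma> (W 0)"
    and mean_ham_const: "\<forall>z\<in>I. Hbar (W z) = Hbar (W 0)"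
  shows "\<forall>z\<in>I.
     Vx (W 0) + 2 * Vxp (W 0) * z
       + min (real CARD('d) * \<sigma>) 2 * (Ham g \<sigma> (W 0) - Hbar (W 0)) * z\<^sup>2 \<le> Vx (W z)
   \<and> Vx (W z) \<le> Vx (W 0) + 2 * Vxp (W 0) * z
       + max (real CARD('d) * \<sigma>) 2 * (Ham g \<sigma> (W 0) - Hbar (W 0)) * z\<^sup>2"
proof -
  have interval: "is_interval I"
    unfolding is_interval_1 I_def by (auto intro: le_less_trans[of "ereal _" "ereal _"])
  have "0 \<in> I"
    using zs_pos by (simp add: I_def zero_ereal_def)
  have density: "phase_density (W t)" if "t \<in> I" for t
    using that nonneg int_W normalized int_xx int_pp by (simp add: phase_density_def)
  have dVx: "((\<lambda>t. Vx (W t)) has_real_derivative 2 * Vxp (W t)) (at t within I)" if "t \<in> I" for t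
    by (rule has_real_derivative_Vx[OF density that]) (use that weak_x weak_xx in auto)
  define E where "E = Ham g \<sigma> (W 0) - Hbar (W 0)"
  have dVxp_bounds: "min (real CARD('d) * \<sigma>) 2 * E \<le> Vp (W t) + real CARD('d) * \<sigma> * Pot g \<sigma> (W t)
      \<and> Vp (W t) + real CARD('d) * \<sigma> * Pot g \<sigma> (W t) \<le> max (real CARD('d) * \<sigma>) 2 * E"
    if "t \<in> I" for t
  proof -
    have Vp: "Vp (W t) = 2 * (E - Pot g \<sigma> (W t))"
      using Vp_eq_Ham[OF density[OF that], where g=g and \<sigma>=\<sigma>] energy_law mean_ham_const that
      by (simp add: E_def)
    have "0 \<le> Pot g \<sigma> (W t)"
      using g_neg sigma_pos by (intro Pot_nonneg) auto
    moreover have "Pot g \<sigma> (W t) \<le> E"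
      using Vp Vp_pos that by auto
    ultimately show ?thesis
      using weighted_sum_between_min_max[of "Pot g \<sigma> (W t)" E "real CARD('d) * \<sigma>" 2]
      unfolding Vp by (simp add: add.commute)
  qed
  show ?thesis
    using second_order_bounds[OF interval dVx variance_identity[rule_format] dVxp_bounds \<open>0 \<in> I\<close>]
    unfolding E_def by (auto simp: I_def)
qed

end
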